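(* Let $F$ be a field of characteristic $0$, $d\ge1$, and let $\lambda,\mu$ be partitions with $\lambda\subset\mu$. (1) If $ST(\lambda)$ is a tensor polynomial identity for $M_d(F)$, then $ST(\mu)$ is a tensor polynomial identity for $M_d(F)$. (2) If $ST(\mu)$ is not a tensor polynomial identity for $M_d(F)$, then $ST(\lambda)$ is not a tensor polynomial identity for $M_d(F)$.
   Context: For partitions $\lambda,\mu$, $\lambda\subset\mu$ means $\lambda_i\le\mu_i$ for all $i$ (parts beyond the length taken as $0$), i.e. the Young diagram of $\lambda$ fits in that of $\mu$. For $\lambda=(h_1,\dots,h_n)\vdash k$, $ST(\lambda)(x_1,\dots,x_k):=\sum_{\tau\in S_k}\epsilon_\tau(X_1\otimes\cdots\otimes X_n)(x_{\tau(1)},\dots,x_{\tau(k)})\in F\langle X\rangle^{\otimes n}$ with $X_j:=x_{h_1+\dots+h_{j-1}+1}\cdots x_{h_1+\dots+h_j}$, $F\langle X\rangle$ the free associative algebra. A tensor polynomial identity (TPI) for $M_d(F)$ is a tensor polynomial vanishing under every evaluation $x_i\mapsto A_i\in M_d(F)$. *)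

theory Defs
  imports "HOL-Analysis.Finite_Cartesian_Product" "HOL-Combinatorics.Permutations"
begin

definition is_partition :: "nat list \<Rightarrow> bool" where
  "is_partition l \<longleftrightarrow> sorted_wrt (\<ge>) l \<and> (\<forall>x\<in>set l. 0 < x)"

definition part :: "nat list \<Rightarrow> nat \<Rightarrow> nat" where
  "part l i = (if i < length l then l ! i else 0)"

definition partition_le :: "nat list \<Rightarrow> nat list \<Rightarrow> bool" where
  "partition_le l m \<longleftrightarrow> (\<forall>i. part l i \<le> part m i)"

definition mat_prod_list :: "(('a::semiring_1)^('d::finite)^'d) list \<Rightarrow> 'a^'d^'d" where
  "mat_prod_list As = foldr (**) As (mat 1)"

text \<open>Value of the block X_j (0-based j) of ST(l) with variables x_i (0-based) substituted
  by A (tau i): X_j = x_s \<dots> x_(s+h_j-1), s = h_0 + ... + h_(j-1).\<close>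
definition ST_block :: "nat list \<Rightarrow> (nat \<Rightarrow> ('a::semiring_1)^('d::finite)^'d) \<Rightarrow> (nat \<Rightarrow> nat) \<Rightarrow> nat \<Rightarrow> 'a^'d^'d" where
  "ST_block l A tau j =
     mat_prod_list (map (\<lambda>i. A (tau i)) [sum_list (take j l)..<sum_list (take (Suc j) l)])"

text \<open>The evaluation of ST(l) at x_i \<mapsto> A i, as an element of M_d(F)^{\<otimes> n}, n = length l,
  identified with its coordinates w.r.t. the basis of tensors of matrix units:
  the coordinate at (p_0,q_0,...,p_(n-1),q_(n-1)) of M_0 \<otimes> ... \<otimes> M_(n-1) is
  \<Prod>j. M_j $ p_j $ q_j.\<close>
definition ST_eval :: "nat list \<Rightarrow> (nat \<Rightarrow> ('a::comm_ring_1)^('d::finite)^'d) \<Rightarrow> (nat \<Rightarrow> 'd \<times> 'd) \<Rightarrow> 'a" where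
  "ST_eval l A idx =
     (\<Sum>tau | tau permutes {..<sum_list l}.
        of_int (sign tau) * (\<Prod>j<length l. ST_block l A tau j $ fst (idx j) $ snd (idx j)))"

definition ST_is_TPI :: "nat list \<Rightarrow> ('a::comm_ring_1) itself \<Rightarrow> ('d::finite) itself \<Rightarrow> bool" where
  "ST_is_TPI l TYPE('a) TYPE('d) \<longleftrightarrow>
     (\<forall>(A :: nat \<Rightarrow> 'a^'d^'d) (idx :: nat \<Rightarrow> 'd \<times> 'd). ST_eval l A idx = 0)"

end

theory Submission
  imports Defs
begin

text \<open>Since \<open>\<lambda> \<subset> \<mu>\<close>, the diagram of \<open>\<mu>\<close> arises from that of \<open>\<lambda>\<close> by appending empty rows,
  whose blocks are identity matrices and only contribute a scalar factor, and then adding boxes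
  one at a time. So it suffices that adding a box at the end of a block \<open>X\<^sub>i\<close> preserves being
  a TPI. Group the terms of the enlarged \<open>ST\<close> by the variable \<open>x\<^sub>m\<close> that \<open>\<tau>\<close> puts into the
  new box. That block becomes \<open>X\<^sub>i x\<^sub>m\<close>, whose \<open>(a,b)\<close>-entry is \<open>\<Sum>\<^sub>r (X\<^sub>i)\<^sub>a\<^sub>r (x\<^sub>m)\<^sub>r\<^sub>b\<close>;
  after renumbering the remaining variables, the group is, up to sign, \<open>\<Sum>\<^sub>r (x\<^sub>m)\<^sub>r\<^sub>b\<close> times an
  evaluation of \<open>ST(\<lambda>)\<close> with the column index of the \<open>i\<close>-th tensor factor replaced by \<open>r\<close>,
  and each of these evaluations vanishes.\<close>

lemma mat_prod_list_snoc:
  "mat_prod_list (xs @ [x]) = mat_prod_list xs ** (x :: ('a::semiring_1)^('d::finite)^'d)"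
  unfolding mat_prod_list_def by (induction xs) (simp_all add: matrix_mul_assoc)

lemma ST_block_beyond_length: "length l \<le> j \<Longrightarrow> ST_block l A tau j = mat 1"
  by (simp add: ST_block_def mat_prod_list_def)

definition ST_term ::
  "nat list \<Rightarrow> (nat \<Rightarrow> ('a::comm_ring_1)^('d::finite)^'d) \<Rightarrow> (nat \<Rightarrow> nat) \<Rightarrow>
    (nat \<Rightarrow> 'd \<times> 'd) \<Rightarrow> 'a"
  where "ST_term l A tau idx = (\<Prod>j<length l. ST_block l A tau j $ fst (idx j) $ snd (idx j))"

lemma ST_eval_eq_sum_ST_term:
  "ST_eval l A idx = (\<Sum>tau | tau permutes {..<sum_list l}. of_int (sign tau) * ST_term l A tau idx)"
  by (simp add: ST_eval_def ST_term_def)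

lemma sum_list_take_mono: "j \<le> j' \<Longrightarrow> sum_list (take j l) \<le> sum_list (take j' (l :: nat list))"
  by (metis le_add1 le_add_diff_inverse sum_list_append take_add)

lemma sum_list_take_le: "sum_list (take j l) \<le> sum_list (l :: nat list)"
  by (metis append_take_drop_id le_add1 sum_list_append)

lemma sum_list_take_incr_nth:
  assumes "i < length l"
  shows "sum_list (take j (l[i := Suc (l ! i)])) = sum_list (take j l) + (if i < j then 1 else 0)"
proof (cases "i < j")
  case True
  with assms show ?thesis by (simp add: take_update_swap sum_list_update)
qed simp

text \<open>\<open>cycle_from p N\<close> is the cycle \<open>(p p+1 \<dots> N)\<close>. Conjugating by such cycles identifies
  permutations of \<open>{..<N}\<close> with permutations \<open>\<tau>\<close> of \<open>{..<Suc N}\<close> with prescribed value \<open>\<tau> p\<close>.\<close>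

definition cycle_from :: "nat \<Rightarrow> nat \<Rightarrow> nat \<Rightarrow> nat" where
  "cycle_from p N i = (if i < p then i else if i < N then Suc i else if i = N then p else i)"

definition cycle_from_inv :: "nat \<Rightarrow> nat \<Rightarrow> nat \<Rightarrow> nat" where
  "cycle_from_inv p N i = (if i < p then i else if i = p then N else if i \<le> N then i - 1 else i)"

lemma cycle_from_cycle_from_inv: "p \<le> N \<Longrightarrow> cycle_from p N (cycle_from_inv p N i) = i"
  by (auto simp: cycle_from_def cycle_from_inv_def)

lemma cycle_from_inv_cycle_from: "p \<le> N \<Longrightarrow> cycle_from_inv p N (cycle_from p N i) = i"
  by (auto simp: cycle_from_def cycle_from_inv_def)

lemma cycle_from_permutes: "p \<le> N \<Longrightarrow> cycle_from p N permutes {..<Suc N}"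
  by (rule bij_imp_permutes, rule bij_betwI[where g = "cycle_from_inv p N"])
    (auto simp: cycle_from_def cycle_from_inv_def)

lemma cycle_from_inv_permutes: "p \<le> N \<Longrightarrow> cycle_from_inv p N permutes {..<Suc N}"
  by (rule bij_imp_permutes, rule bij_betwI[where g = "cycle_from p N"])
    (auto simp: cycle_from_def cycle_from_inv_def)

lemma bij_betw_permutes_lessThan_Suc:
  assumes "p \<le> N" "m \<le> N"
  shows "bij_betw (\<lambda>sigma. cycle_from m N \<circ> sigma \<circ> cycle_from_inv p N)
           {sigma. sigma permutes {..<N}} {tau. tau permutes {..<Suc N} \<and> tau p = m}"
proof (rule bij_betwI[where g = "\<lambda>tau. cycle_from_inv m N \<circ> tau \<circ> cycle_from p N"])
  have "cycle_from m N \<circ> sigma \<circ> cycle_from_inv p N permutes {..<Suc N}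
      \<and> (cycle_from m N \<circ> sigma \<circ> cycle_from_inv p N) p = m"
    if sigma: "sigma permutes {..<N}" for sigma
  proof
    have "sigma permutes {..<Suc N}" using sigma by (rule permutes_subset) auto
    then show "cycle_from m N \<circ> sigma \<circ> cycle_from_inv p N permutes {..<Suc N}"
      using assms by (intro permutes_compose cycle_from_permutes cycle_from_inv_permutes)
    have "sigma N = N" using sigma by (simp add: permutes_not_in)
    then show "(cycle_from m N \<circ> sigma \<circ> cycle_from_inv p N) p = m"
      using assms by (simp add: cycle_from_def cycle_from_inv_def)
  qed
  then show "(\<lambda>sigma. cycle_from m N \<circ> sigma \<circ> cycle_from_inv p N) \<in>
      {sigma. sigma permutes {..<N}} \<rightarrow> {tau. tau permutes {..<Suc N} \<and> tau p = m}"
    by blast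
  have "cycle_from_inv m N \<circ> tau \<circ> cycle_from p N permutes {..<N}"
    if tau: "tau permutes {..<Suc N}" "tau p = m" for tau
  proof -
    have "cycle_from_inv m N \<circ> tau \<circ> cycle_from p N permutes {..<Suc N}"
      using assms tau(1) by (intro permutes_compose cycle_from_permutes cycle_from_inv_permutes)
    moreover have "(cycle_from_inv m N \<circ> tau \<circ> cycle_from p N) N = N"
      using assms tau(2) by (simp add: cycle_from_def cycle_from_inv_def)
    ultimately show ?thesis
      by (elim permutes_superset) (auto simp: less_Suc_eq)
  qed
  then show "(\<lambda>tau. cycle_from_inv m N \<circ> tau \<circ> cycle_from p N) \<in>
      {tau. tau permutes {..<Suc N} \<and> tau p = m} \<rightarrow> {sigma. sigma permutes {..<N}}"
    by blast
qed (use assms in \<open>simp_all add: fun_eq_iff cycle_from_cycle_from_inv cycle_from_inv_cycle_from\<close>)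

text \<open>Position \<open>sum_list (take (Suc i) l)\<close> is the new box of block \<open>i\<close>. The hypotheses say that
  the enlarged monomial carries \<open>C\<close> there and, at the other positions renumbered by
  \<open>cycle_from\<close>, the variables of the old monomial.\<close>

lemma ST_block_incr_part:
  fixes A B :: "nat \<Rightarrow> ('a::semiring_1)^('d::finite)^'d"
  assumes i: "i < length l"
    and old: "\<And>k. k < sum_list l \<Longrightarrow>
      A (tau (cycle_from (sum_list (take (Suc i) l)) (sum_list l) k)) = B (sigma k)"
    and new: "A (tau (sum_list (take (Suc i) l))) = C"
  shows "j \<noteq> i \<Longrightarrow> ST_block (l[i := Suc (l ! i)]) A tau j = ST_block l B sigma j"
    and "ST_block (l[i := Suc (l ! i)]) A tau i = ST_block l B sigma i ** C"
proof -
  define N where "N = sum_list l"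
  define p where "p = sum_list (take (Suc i) l)"
  define s where "s j = sum_list (take j l)" for j
  have pN: "p \<le> N" unfolding p_def N_def by (rule sum_list_take_le)
  have s_le_N: "s j \<le> N" for j unfolding s_def N_def by (rule sum_list_take_le)
  have new_bounds: "sum_list (take j (l[i := Suc (l ! i)])) = s j + (if i < j then 1 else 0)" for j
    unfolding s_def by (rule sum_list_take_incr_nth[OF i])
  have below: "A (tau k) = B (sigma k)" if "k < p" for k
    using old[of k] that pN by (simp add: N_def p_def cycle_from_def)
  have above: "A (tau (Suc k)) = B (sigma k)" if "p \<le> k" "k < N" for k
    using old[of k] that by (simp add: N_def p_def cycle_from_def)
  show "ST_block (l[i := Suc (l ! i)]) A tau j = ST_block l B sigma j" if "j \<noteq> i"
  proof (cases "j < i")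
    case True
    have "s (Suc j) \<le> p" unfolding s_def p_def using True by (intro sum_list_take_mono) simp
    then show ?thesis
      using True below by (auto simp: ST_block_def new_bounds s_def intro!: arg_cong[of _ _ mat_prod_list])
  next
    case False
    with that have "i < j" by simp
    then have "p \<le> s j" unfolding s_def p_def by (intro sum_list_take_mono) simp
    have "map (\<lambda>k. A (tau k)) [Suc (s j)..<Suc (s (Suc j))]
        = map (\<lambda>k. A (tau (Suc k))) [s j..<s (Suc j)]"
      by (simp only: map_Suc_upt[symmetric] map_map comp_def)
    also have "\<dots> = map (\<lambda>k. B (sigma k)) [s j..<s (Suc j)]"
      using above \<open>p \<le> s j\<close> s_le_N[of "Suc j"] by (intro map_cong) auto
    finally show ?thesis
      using \<open>i < j\<close> by (simp add: ST_block_def new_bounds s_def del: map_eq_conv)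
  qed
  have "s i \<le> p" unfolding s_def p_def by (intro sum_list_take_mono) simp
  then have "map (\<lambda>k. A (tau k)) [s i..<Suc p] = map (\<lambda>k. B (sigma k)) [s i..<p] @ [C]"
    using below new by (simp add: p_def)
  then show "ST_block (l[i := Suc (l ! i)]) A tau i = ST_block l B sigma i ** C"
    by (simp add: ST_block_def new_bounds s_def p_def mat_prod_list_snoc del: map_eq_conv)
qed

lemma ST_term_incr_part:
  fixes A B :: "nat \<Rightarrow> ('a::comm_ring_1)^('d::finite)^'d"
  assumes i: "i < length l"
    and old: "\<And>k. k < sum_list l \<Longrightarrow>
      A (tau (cycle_from (sum_list (take (Suc i) l)) (sum_list l) k)) = B (sigma k)"
    and new: "A (tau (sum_list (take (Suc i) l))) = C"
  shows "ST_term (l[i := Suc (l ! i)]) A tau idx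
    = (\<Sum>r\<in>UNIV. C $ r $ snd (idx i) * ST_term l B sigma (idx(i := (fst (idx i), r))))"
proof -
  note blocks = ST_block_incr_part[where A = A and B = B and tau = tau and sigma = sigma, OF i old new]
  define rest where "rest = (\<Prod>j\<in>{..<length l} - {i}. ST_block l B sigma j $ fst (idx j) $ snd (idx j))"
  have "ST_term (l[i := Suc (l ! i)]) A tau idx
      = ST_block (l[i := Suc (l ! i)]) A tau i $ fst (idx i) $ snd (idx i) * rest"
    using i blocks(1)
    by (simp add: ST_term_def rest_def prod.remove[of "{..<length l}" i])
  also have "\<dots> = (\<Sum>r\<in>UNIV. ST_block l B sigma i $ fst (idx i) $ r * C $ r $ snd (idx i)) * rest"
    by (simp add: blocks(2) matrix_matrix_mult_def)
  also have "\<dots> = (\<Sum>r\<in>UNIV. C $ r $ snd (idx i) * ST_term l B sigma (idx(i := (fst (idx i), r))))"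
    using i by (simp add: ST_term_def rest_def prod.remove[of "{..<length l}" i] sum_distrib_right mult_ac)
  finally show ?thesis .
qed

lemma ST_eval_incr_part_fibre:
  fixes A :: "nat \<Rightarrow> ('a::comm_ring_1)^('d::finite)^'d"
  assumes i: "i < length l" and m: "m \<le> sum_list l"
  defines "p \<equiv> sum_list (take (Suc i) l)" and "N \<equiv> sum_list l"
  shows "(\<Sum>tau | tau permutes {..<Suc N} \<and> tau p = m.
            of_int (sign tau) * ST_term (l[i := Suc (l ! i)]) A tau idx)
       = of_int (sign (cycle_from m N) * sign (cycle_from_inv p N)) *
         (\<Sum>r\<in>UNIV. A m $ r $ snd (idx i) * ST_eval l (A \<circ> cycle_from m N) (idx(i := (fst (idx i), r))))"
proof -
  have pN: "p \<le> N" unfolding p_def N_def by (rule sum_list_take_le)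
  have mN: "m \<le> N" using m by (simp add: N_def)
  define c where "c = sign (cycle_from m N) * sign (cycle_from_inv p N)"
  have "of_int (sign (cycle_from m N \<circ> sigma \<circ> cycle_from_inv p N)) *
          ST_term (l[i := Suc (l ! i)]) A (cycle_from m N \<circ> sigma \<circ> cycle_from_inv p N) idx
      = of_int c * (\<Sum>r\<in>UNIV. A m $ r $ snd (idx i) *
          (of_int (sign sigma) * ST_term l (A \<circ> cycle_from m N) sigma (idx(i := (fst (idx i), r)))))"
    if sigma: "sigma permutes {..<N}" for sigma
  proof -
    have "permutation sigma" "permutation (cycle_from m N)" "permutation (cycle_from_inv p N)"
      using sigma cycle_from_permutes[OF mN] cycle_from_inv_permutes[OF pN]
      by (auto intro: permutes_imp_permutation)
    then have "sign (cycle_from m N \<circ> sigma \<circ> cycle_from_inv p N) = c * sign sigma"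
      by (simp add: c_def sign_compose permutation_compose)
    moreover have "sigma N = N" using sigma by (simp add: permutes_not_in)
    then have "ST_term (l[i := Suc (l ! i)]) A (cycle_from m N \<circ> sigma \<circ> cycle_from_inv p N) idx
      = (\<Sum>r\<in>UNIV. A m $ r $ snd (idx i) * ST_term l (A \<circ> cycle_from m N) sigma (idx(i := (fst (idx i), r))))"
      using pN mN
      by (intro ST_term_incr_part[OF i])
        (simp_all flip: N_def p_def add: cycle_from_inv_cycle_from,
         simp add: cycle_from_def cycle_from_inv_def)
    ultimately show ?thesis by (simp add: sum_distrib_left mult_ac)
  qed
  then have "(\<Sum>tau | tau permutes {..<Suc N} \<and> tau p = m.
            of_int (sign tau) * ST_term (l[i := Suc (l ! i)]) A tau idx)
      = (\<Sum>sigma | sigma permutes {..<N}. of_int c * (\<Sum>r\<in>UNIV. A m $ r $ snd (idx i) *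
          (of_int (sign sigma) * ST_term l (A \<circ> cycle_from m N) sigma (idx(i := (fst (idx i), r))))))"
    by (simp add: sum.reindex_bij_betw[OF bij_betw_permutes_lessThan_Suc[OF pN mN], symmetric])
  also have "\<dots> = of_int c *
      (\<Sum>r\<in>UNIV. A m $ r $ snd (idx i) * ST_eval l (A \<circ> cycle_from m N) (idx(i := (fst (idx i), r))))"
    by (simp add: ST_eval_eq_sum_ST_term N_def sum_distrib_left) (rule sum.swap)
  finally show ?thesis by (simp add: c_def)
qed

lemma ST_is_TPI_incr_part:
  assumes "ST_is_TPI l TYPE('a::comm_ring_1) TYPE('d::finite)" and i: "i < length l"
  shows "ST_is_TPI (l[i := Suc (l ! i)]) TYPE('a) TYPE('d)"
  unfolding ST_is_TPI_def
proof safe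
  fix A :: "nat \<Rightarrow> 'a^'d^'d" and idx :: "nat \<Rightarrow> 'd \<times> 'd"
  define N where "N = sum_list l"
  define p where "p = sum_list (take (Suc i) l)"
  define f where "f tau = of_int (sign tau) * ST_term (l[i := Suc (l ! i)]) A tau idx" for tau
  have pN: "p \<le> N" unfolding p_def N_def by (rule sum_list_take_le)
  have "sum_list (l[i := Suc (l ! i)]) = Suc N"
    using sum_list_take_incr_nth[OF i, of "length l"] i by (simp add: N_def)
  then have "ST_eval (l[i := Suc (l ! i)]) A idx = sum f {tau. tau permutes {..<Suc N}}"
    by (simp add: ST_eval_eq_sum_ST_term f_def)
  also have "\<dots> = (\<Sum>m<Suc N. sum f {tau \<in> {tau. tau permutes {..<Suc N}}. tau p = m})"
    using pN by (intro sum.group[symmetric])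
      (auto simp: finite_permutations dest: permutes_in_image[where x = p])
  also have "\<dots> = 0"
    using assms(1) unfolding ST_is_TPI_def
    by (intro sum.neutral) (simp add: f_def ST_eval_incr_part_fibre[OF i] N_def p_def less_Suc_eq_le)
  finally show "ST_eval (l[i := Suc (l ! i)]) A idx = 0" .
qed

lemma ST_eval_append_zeros:
  "ST_eval (l @ replicate k 0) A idx
     = (\<Prod>j\<in>{length l..<length l + k}. (mat 1 :: ('a::comm_ring_1)^('d::finite)^'d) $ fst (idx j) $ snd (idx j))
       * ST_eval l A idx"
proof -
  have blocks: "ST_block (l @ replicate k 0) A tau = ST_block l A tau" for tau
    by (simp add: fun_eq_iff ST_block_def sum_list_replicate)
  have beyond: "(\<Prod>j\<in>{length l..<length l + k}. ST_block l A tau j $ fst (idx j) $ snd (idx j))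
      = (\<Prod>j\<in>{length l..<length l + k}. (mat 1 :: 'a^'d^'d) $ fst (idx j) $ snd (idx j))" for tau
    by (rule prod.cong) (simp_all add: ST_block_beyond_length)
  have "{..<length l + k} = {..<length l} \<union> {length l..<length l + k}" by auto
  then have "ST_term (l @ replicate k 0) A tau idx
      = (\<Prod>j\<in>{length l..<length l + k}. (mat 1 :: 'a^'d^'d) $ fst (idx j) $ snd (idx j)) * ST_term l A tau idx"
    for tau
    by (simp add: ST_term_def blocks prod.union_disjoint ivl_disj_int beyond mult.commute)
  then show ?thesis
    by (simp add: ST_eval_eq_sum_ST_term sum_list_replicate sum_distrib_left mult.left_commute)
qed

lemma ST_is_TPI_append_zeros:
  "ST_is_TPI l TYPE('a::comm_ring_1) TYPE('d::finite) \<Longrightarrow>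
    ST_is_TPI (l @ replicate k 0) TYPE('a) TYPE('d)"
  by (simp add: ST_is_TPI_def ST_eval_append_zeros)

lemma ST_is_TPI_mono:
  assumes "ST_is_TPI l TYPE('a::comm_ring_1) TYPE('d::finite)"
    and "length l = length m" "\<forall>i<length l. l ! i \<le> m ! i"
  shows "ST_is_TPI m TYPE('a) TYPE('d)"
  using assms
proof (induction "sum_list m - sum_list l" arbitrary: l rule: less_induct)
  case less
  show ?case
  proof (cases "l = m")
    case True
    then show ?thesis using less.prems by simp
  next
    case False
    then obtain i where i: "i < length l" "l ! i < m ! i"
      using less.prems(2,3) nth_equalityI le_neq_implies_less by metis
    define l' where "l' = l[i := Suc (l ! i)]"
    have "ST_is_TPI l' TYPE('a) TYPE('d)"
      unfolding l'_def using less.prems(1) i(1) by (rule ST_is_TPI_incr_part)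
    moreover have "length l' = length m" "\<forall>i<length l'. l' ! i \<le> m ! i"
      using less.prems(2,3) i by (auto simp: l'_def nth_list_update)
    moreover have "sum_list l' = Suc (sum_list l)"
      using sum_list_take_incr_nth[OF i(1), of "length l"] i(1) by (simp add: l'_def)
    moreover have "sum_list l' \<le> sum_list m"
      using calculation(2,3) by (intro sum_list_mono2) auto
    ultimately show ?thesis using less.hyps[of l'] by simp
  qed
qed

lemma partition_le_length:
  assumes "is_partition lam" "partition_le lam mu"
  shows "length lam \<le> length mu"
proof (rule ccontr)
  assume "\<not> length lam \<le> length mu"
  then have "0 < part lam (length mu)"
    using assms(1) by (simp add: is_partition_def part_def)
  moreover have "part lam (length mu) \<le> part mu (length mu)"
    using assms(2) by (simp add: partition_le_def)
  ultimately show False by (simp add: part_def)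
qed

theorem mainTheorem10:
  fixes lam mu :: "nat list"
  assumes "is_partition lam" and "is_partition mu" and "partition_le lam mu"
  shows "(ST_is_TPI lam TYPE('a::field_char_0) TYPE('d::finite)
            \<longrightarrow> ST_is_TPI mu TYPE('a) TYPE('d))
       \<and> (\<not> ST_is_TPI mu TYPE('a) TYPE('d) \<longrightarrow> \<not> ST_is_TPI lam TYPE('a) TYPE('d))"
proof -
  define padded where "padded = lam @ replicate (length mu - length lam) 0"
  have len: "length padded = length mu"
    using partition_le_length[OF assms(1,3)] by (simp add: padded_def)
  have "padded ! i \<le> mu ! i" if "i < length padded" for i
  proof -
    have "part lam i \<le> part mu i" using assms(3) by (simp add: partition_le_def)
    then show ?thesis using that len by (simp add: padded_def part_def nth_append split: if_splits)
  qed
  then have "ST_is_TPI mu TYPE('a) TYPE('d)" if "ST_is_TPI lam TYPE('a) TYPE('d)"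
    using ST_is_TPI_mono[OF ST_is_TPI_append_zeros[OF that] _] len by (simp add: padded_def)
  then show ?thesis by blast
qed

end
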